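(* Let $S$ be a stochastic operator and let $(V_1,\varphi_1)$ and $(V_2,\varphi_2)$ be two pairs, each consisting of a measurable weight $V_i:\Omega\to[1,\infty)$ and an admissible rate function $\varphi_i$, such that $\varphi_2(V_2)\ge V_1$ on $\Omega$. Assume that for each $i\in\{1,2\}$, $S$ is a stochastic operator on $\mathcal M_{V_i}$ and: (1) there exist $K_i>0$, $0<\varsigma_i<1$ with $\|S\mu\|_{V_i}+\varsigma_i\|\mu\|_{\varphi_i(V_i)}\le\|\mu\|_{V_i}+K_i\|\mu\|$ for all $\mu\in\mathcal M_{V_i}$; (2) for some integer $N_i\ge1$ there exist $0<\gamma_{H,i}<1$ and $A_i>K_i/\varsigma_i$ such that for every $\nu\in\mathcal N_{\varphi_i(V_i)}$ with $\|\nu\|_{\varphi_i(V_i)}\le A_i\|\nu\|$ one has $\|S^{N_i}\nu\|\le\gamma_{H,i}\|\nu\|$. Then $S$ has at most one equilibrium in $\mathcal P_{\varphi_2(V_2)}$.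
   Context: Let $(\Omega,\mathcal E)$ be a measurable space. $\mathcal M$ denotes the space of finite signed measures on $\Omega$, $\mathcal P\subset\mathcal M$ the set of probability measures, and $\mathcal N=\{\nu\in\mathcal M:\nu(\Omega)=0\}$. For $\mu\in\mathcal M$ with Hahn–Jordan decomposition $\mu=\mu_+-\mu_-$, $|\mu|=\mu_++\mu_-$ and $\|\mu\|=\int_\Omega d|\mu|$ is the total variation norm. For a measurable $W:\Omega\to[1,\infty)$, $\|\mu\|_W=\int_\Omega W\,d|\mu|$, $\mathcal M_W=\{\mu\in\mathcal M:\|\mu\|_W<\infty\}$, $\mathcal P_W=\mathcal P\cap\mathcal M_W$, $\mathcal N_W=\mathcal N\cap\mathcal M_W$. A stochastic operator is a linear map $S:\mathcal M\to\mathcal M$ with $S(\mathcal P)\subseteq\mathcal P$; it is a stochastic operator on $\mathcal M_W$ if moreover $S(\mathcal M_W)\subseteq\mathcal M_W$ and the restriction is bounded for $\|\cdot\|_W$. An admissible rate function is a concave function $\varphi:[1,\infty)\to[1,\infty)$ with $\varphi(1)=1$ and $\varphi(v)/v\to0$ as $v\to\infty$; $\varphi(V)$ denotes the composition $\varphi\circ V$. An equilibrium of $S$ is a $\mu\in\mathcal P$ with $S\mu=\mu$. *)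

theory Defs
  imports "HOL-Analysis.Analysis"
begin

definition fsm :: "'a measure \<Rightarrow> ('a set \<Rightarrow> real) set" where
  "fsm M = {\<mu>. \<mu> {} = 0 \<and> (\<forall>A. A \<notin> sets M \<longrightarrow> \<mu> A = 0) \<and>
     (\<forall>A::nat \<Rightarrow> 'a set. range A \<subseteq> sets M \<longrightarrow> disjoint_family A \<longrightarrow>
        (\<lambda>n. \<mu> (A n)) sums \<mu> (\<Union>(range A)))}"

definition prob_meas :: "'a measure \<Rightarrow> ('a set \<Rightarrow> real) set" where
  "prob_meas M = {\<mu>\<in>fsm M. (\<forall>A\<in>sets M. 0 \<le> \<mu> A) \<and> \<mu> (space M) = 1}"

definition pos_part :: "'a measure \<Rightarrow> ('a set \<Rightarrow> real) \<Rightarrow> 'a set \<Rightarrow> real" where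
  "pos_part M \<mu> A = (SUP B\<in>{B\<in>sets M. B \<subseteq> A}. \<mu> B)"

definition neg_part :: "'a measure \<Rightarrow> ('a set \<Rightarrow> real) \<Rightarrow> 'a set \<Rightarrow> real" where
  "neg_part M \<mu> A = pos_part M (\<lambda>B. - \<mu> B) A"

definition abs_meas :: "'a measure \<Rightarrow> ('a set \<Rightarrow> real) \<Rightarrow> 'a measure" where
  "abs_meas M \<mu> = measure_of (space M) (sets M)
      (\<lambda>A. ennreal (pos_part M \<mu> A + neg_part M \<mu> A))"

definition wnorm :: "'a measure \<Rightarrow> ('a \<Rightarrow> real) \<Rightarrow> ('a set \<Rightarrow> real) \<Rightarrow> ennreal" where
  "wnorm M W \<mu> = (\<integral>\<^sup>+ x. ennreal (W x) \<partial>(abs_meas M \<mu>))"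

definition tvnorm :: "'a measure \<Rightarrow> ('a set \<Rightarrow> real) \<Rightarrow> ennreal" where
  "tvnorm M \<mu> = wnorm M (\<lambda>_. 1) \<mu>"

definition meas_W :: "'a measure \<Rightarrow> ('a \<Rightarrow> real) \<Rightarrow> ('a set \<Rightarrow> real) set" where
  "meas_W M W = {\<mu>\<in>fsm M. wnorm M W \<mu> < \<infinity>}"

definition zero_mass :: "'a measure \<Rightarrow> ('a set \<Rightarrow> real) set" where
  "zero_mass M = {\<nu>\<in>fsm M. \<nu> (space M) = 0}"

definition weight :: "'a measure \<Rightarrow> ('a \<Rightarrow> real) \<Rightarrow> bool" where
  "weight M W \<longleftrightarrow> W \<in> borel_measurable M \<and> (\<forall>x\<in>space M. 1 \<le> W x)"

definition stochastic_op ::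
  "'a measure \<Rightarrow> (('a set \<Rightarrow> real) \<Rightarrow> ('a set \<Rightarrow> real)) \<Rightarrow> bool" where
  "stochastic_op M S \<longleftrightarrow>
     (\<forall>\<mu>\<in>fsm M. S \<mu> \<in> fsm M) \<and>
     (\<forall>\<mu>\<in>fsm M. \<forall>\<nu>\<in>fsm M. \<forall>a b::real.
        S (\<lambda>A. a * \<mu> A + b * \<nu> A) = (\<lambda>A. a * S \<mu> A + b * S \<nu> A)) \<and>
     (\<forall>\<mu>\<in>prob_meas M. S \<mu> \<in> prob_meas M)"

definition stochastic_op_on ::
  "'a measure \<Rightarrow> ('a \<Rightarrow> real) \<Rightarrow> (('a set \<Rightarrow> real) \<Rightarrow> ('a set \<Rightarrow> real)) \<Rightarrow> bool" where
  "stochastic_op_on M W S \<longleftrightarrow> stochastic_op M S \<and>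
     (\<forall>\<mu>\<in>meas_W M W. S \<mu> \<in> meas_W M W) \<and>
     (\<exists>C::real. \<forall>\<mu>\<in>meas_W M W. wnorm M W (S \<mu>) \<le> ennreal C * wnorm M W \<mu>)"

definition admissible_rate :: "(real \<Rightarrow> real) \<Rightarrow> bool" where
  "admissible_rate \<phi> \<longleftrightarrow> concave_on {1..} \<phi> \<and> (\<forall>v\<ge>1. 1 \<le> \<phi> v) \<and> \<phi> 1 = 1 \<and>
     ((\<lambda>v. \<phi> v / v) \<longlongrightarrow> 0) at_top"

definition drift_cond :: "'a measure \<Rightarrow> (('a set \<Rightarrow> real) \<Rightarrow> ('a set \<Rightarrow> real)) \<Rightarrow>
    ('a \<Rightarrow> real) \<Rightarrow> (real \<Rightarrow> real) \<Rightarrow> real \<Rightarrow> real \<Rightarrow> bool" where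
  "drift_cond M S V \<phi> K \<sigma> \<longleftrightarrow>
     (\<forall>\<mu>\<in>meas_W M V. wnorm M V (S \<mu>) + ennreal \<sigma> * wnorm M (\<phi> \<circ> V) \<mu>
                       \<le> wnorm M V \<mu> + ennreal K * tvnorm M \<mu>)"

definition contract_cond :: "'a measure \<Rightarrow> (('a set \<Rightarrow> real) \<Rightarrow> ('a set \<Rightarrow> real)) \<Rightarrow>
    ('a \<Rightarrow> real) \<Rightarrow> (real \<Rightarrow> real) \<Rightarrow> nat \<Rightarrow> real \<Rightarrow> real \<Rightarrow> bool" where
  "contract_cond M S V \<phi> N \<gamma> A \<longleftrightarrow>
     (\<forall>\<nu>\<in>zero_mass M \<inter> meas_W M (\<phi> \<circ> V).
        wnorm M (\<phi> \<circ> V) \<nu> \<le> ennreal A * tvnorm M \<nu> \<longrightarrow>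
        tvnorm M ((S ^^ N) \<nu>) \<le> ennreal \<gamma> * tvnorm M \<nu>)"

end

theory Submission
  imports Defs
begin

text \<open>If \<mu> and \<nu> are equilibria, the zero-mass measure d = \<mu> - \<nu> is fixed by S, so the
  V-norms cancel in the drift condition for d, leaving \<sigma> \<parallel>d\<parallel>_\<phi>(V) \<le> K \<parallel>d\<parallel>. Hence d lies
  in the cone where S^N contracts the total variation norm, and S^N d = d forces \<parallel>d\<parallel> = 0.
  Only the pair (V1, \<phi>1) is needed; V1 \<le> \<phi>2(V2) places equilibria with finite \<phi>2(V2)-norm
  among the measures with finite V1-norm. To compute with the total variation measure,
  \<mu> and \<nu> are represented by densities with respect to \<mu> + \<nu>.\<close>

definition fsm_measure :: "'a measure \<Rightarrow> ('a set \<Rightarrow> real) \<Rightarrow> 'a measure" where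
  "fsm_measure M \<rho> = measure_of (space M) (sets M) (\<lambda>A. ennreal (\<rho> A))"

lemma sets_fsm_measure [simp]: "sets (fsm_measure M \<rho>) = sets M"
  unfolding fsm_measure_def by (simp add: sets.sets_measure_of_eq)

lemma space_fsm_measure [simp]: "space (fsm_measure M \<rho>) = space M"
  unfolding fsm_measure_def by (simp add: sets.space_measure_of_eq)

lemma emeasure_fsm_measure:
  assumes "\<rho> \<in> fsm M" "\<forall>A\<in>sets M. 0 \<le> \<rho> A" "A \<in> sets M"
  shows "emeasure (fsm_measure M \<rho>) A = ennreal (\<rho> A)"
  unfolding fsm_measure_def
proof (rule emeasure_measure_of_sigma)
  show "sigma_algebra (space M) (sets M)" by (rule sets.sigma_algebra_axioms)
  show "positive (sets M) (\<lambda>A. ennreal (\<rho> A))"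
    using assms(1) by (simp add: positive_def fsm_def)
  show "countably_additive (sets M) (\<lambda>A. ennreal (\<rho> A))"
    unfolding countably_additive_def
  proof (intro allI impI)
    fix F :: "nat \<Rightarrow> 'a set"
    assume F: "range F \<subseteq> sets M" "disjoint_family F" "\<Union> (range F) \<in> sets M"
    have sums: "(\<lambda>n. \<rho> (F n)) sums \<rho> (\<Union>(range F))" using assms(1) F unfolding fsm_def by blast
    have "(\<Sum>i. ennreal (\<rho> (F i))) = ennreal (\<Sum>i. \<rho> (F i))"
      using F assms(2) sums by (intro suminf_ennreal2) (auto simp: sums_iff)
    also have "\<dots> = ennreal (\<rho> (\<Union>(range F)))" using sums by (simp add: sums_iff)
    finally show "(\<Sum>i. ennreal (\<rho> (F i))) = ennreal (\<rho> (\<Union>(range F)))" .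
  qed
qed fact

lemma finite_measure_fsm_measure:
  assumes "\<rho> \<in> fsm M" "\<forall>A\<in>sets M. 0 \<le> \<rho> A"
  shows "finite_measure (fsm_measure M \<rho>)"
  by (rule finite_measureI) (simp add: emeasure_fsm_measure[OF assms sets.top])

lemma fsm_add: "\<mu> \<in> fsm M \<Longrightarrow> \<nu> \<in> fsm M \<Longrightarrow> (\<lambda>A. \<mu> A + \<nu> A) \<in> fsm M"
  unfolding fsm_def by (auto intro: sums_add)

lemma fsm_diff: "\<mu> \<in> fsm M \<Longrightarrow> \<nu> \<in> fsm M \<Longrightarrow> (\<lambda>A. \<mu> A - \<nu> A) \<in> fsm M"
  unfolding fsm_def by (auto intro: sums_diff)

lemma fsm_density_representation:
  assumes \<rho>: "\<rho> \<in> fsm M" "\<forall>A\<in>sets M. 0 \<le> \<rho> A"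
    and \<alpha>: "\<alpha> \<in> fsm M" "\<forall>A\<in>sets M. 0 \<le> \<alpha> A" "\<forall>A\<in>sets M. \<alpha> A \<le> \<rho> A"
  obtains f where "f \<in> borel_measurable (fsm_measure M \<rho>)" "\<And>x. 0 \<le> f x"
    "integrable (fsm_measure M \<rho>) f"
    "\<forall>B\<in>sets M. \<alpha> B = (\<integral>x. f x * indicator B x \<partial>fsm_measure M \<rho>)"
proof -
  let ?L = "fsm_measure M \<rho>"
  interpret L: finite_measure ?L by (rule finite_measure_fsm_measure[OF \<rho>])
  have ac: "absolutely_continuous ?L (fsm_measure M \<alpha>)"
    unfolding absolutely_continuous_def
  proof
    fix A assume "A \<in> null_sets ?L"
    then have A: "A \<in> sets M" "\<rho> A \<le> 0"
      using emeasure_fsm_measure[OF \<rho>] by (auto simp: null_sets_def ennreal_eq_0_iff)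
    then have "\<alpha> A = 0" using \<alpha> by (meson antisym order.trans)
    then show "A \<in> null_sets (fsm_measure M \<alpha>)"
      using emeasure_fsm_measure[OF \<alpha>(1,2) A(1)] A by (simp add: null_sets_def)
  qed
  obtain f where f: "f \<in> borel_measurable ?L" "AE x in ?L. RN_deriv ?L (fsm_measure M \<alpha>) x = ennreal (f x)"
      "\<And>x. 0 \<le> f x"
    using L.real_RN_deriv[OF finite_measure_fsm_measure[OF \<alpha>(1,2)] ac] by auto
  have "density ?L (\<lambda>x. ennreal (f x)) = density ?L (RN_deriv ?L (fsm_measure M \<alpha>))"
    using f by (intro density_cong) auto
  also have "\<dots> = fsm_measure M \<alpha>" using L.density_RN_deriv[OF ac] by simp
  finally have dens: "density ?L (\<lambda>x. ennreal (f x)) = fsm_measure M \<alpha>" .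
  have fB: "integrable ?L (\<lambda>x. f x * indicator B x) \<and> (\<integral>x. f x * indicator B x \<partial>?L) = \<alpha> B"
    if B: "B \<in> sets M" for B
  proof -
    have "(\<integral>\<^sup>+x. ennreal (f x * indicator B x) \<partial>?L) = (\<integral>\<^sup>+x. ennreal (f x) * indicator B x \<partial>?L)"
      by (intro nn_integral_cong) (auto split: split_indicator)
    also have "\<dots> = ennreal (\<alpha> B)"
      using B f(1) dens emeasure_fsm_measure[OF \<alpha>(1,2) B] by (subst emeasure_density[symmetric]) auto
    finally show ?thesis
      using B f(1,3) \<alpha>(2)
      by (subst nn_integral_eq_integrable[symmetric]) (auto intro!: borel_measurable_times borel_measurable_indicator)
  qed
  have "integrable ?L f"
    using conjunct1[OF fB[OF sets.top]]
    by (rule Bochner_Integration.integrable_cong[THEN iffD1, rotated -1]) auto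
  then show ?thesis by (intro that[OF f(1) f(3)]) (use fB in auto)
qed

lemma pos_part_diff_density:
  fixes L M :: "'a measure" and f g :: "'a \<Rightarrow> real"
  assumes sL: "sets L = sets M"
    and f: "f \<in> borel_measurable L" "integrable L f"
    and g: "g \<in> borel_measurable L" "integrable L g"
    and \<mu>: "\<forall>B\<in>sets M. \<mu> B = (\<integral>x. f x * indicator B x \<partial>L)"
    and \<nu>: "\<forall>B\<in>sets M. \<nu> B = (\<integral>x. g x * indicator B x \<partial>L)"
    and A: "A \<in> sets M"
  shows "pos_part M (\<lambda>B. \<mu> B - \<nu> B) A = (\<integral>x. max 0 (f x - g x) * indicator A x \<partial>L)"
proof -
  let ?v = "(\<integral>x. max 0 (f x - g x) * indicator A x \<partial>L)"
  have iA: "integrable L (\<lambda>x. max 0 (f x - g x) * indicator A x)"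
    using A sL f g by (intro integrable_real_mult_indicator integrable_max) auto
  have diff: "\<mu> B - \<nu> B = (\<integral>x. (f x - g x) * indicator B x \<partial>L)"
    and iB: "integrable L (\<lambda>x. (f x - g x) * indicator B x)" if "B \<in> sets M" for B
    using that sL f g \<mu> \<nu>
    by (auto simp: left_diff_distrib intro!: integrable_real_mult_indicator
        Bochner_Integration.integral_diff[symmetric])
  define B0 where "B0 = A \<inter> {x\<in>space L. 0 < f x - g x}"
  have "{x\<in>space L. 0 < f x - g x} \<in> sets L" using f g by measurable
  then have B0: "B0 \<in> sets M" unfolding B0_def using A sL by auto
  show ?thesis unfolding pos_part_def
  proof (rule cSup_eq_maximum)
    have "(\<integral>x. (f x - g x) * indicator B0 x \<partial>L) = ?v"
      by (rule Bochner_Integration.integral_cong) (auto simp: B0_def split: split_indicator)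
    then show "?v \<in> (\<lambda>B. \<mu> B - \<nu> B) ` {B \<in> sets M. B \<subseteq> A}"
      using diff[OF B0] B0 by (auto simp: B0_def intro!: image_eqI[of _ _ B0])
  next
    fix y assume "y \<in> (\<lambda>B. \<mu> B - \<nu> B) ` {B \<in> sets M. B \<subseteq> A}"
    then obtain B where B: "B \<in> sets M" "B \<subseteq> A" "y = \<mu> B - \<nu> B" by auto
    have "(\<integral>x. (f x - g x) * indicator B x \<partial>L) \<le> ?v"
      using B by (intro integral_mono iB iA) (auto split: split_indicator)
    then show "y \<le> ?v" using diff B by simp
  qed
qed

lemma abs_meas_diff_density:
  fixes L M :: "'a measure" and f g :: "'a \<Rightarrow> real"
  assumes sL: "sets L = sets M"
    and f: "f \<in> borel_measurable L" "integrable L f"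
    and g: "g \<in> borel_measurable L" "integrable L g"
    and \<mu>: "\<forall>B\<in>sets M. \<mu> B = (\<integral>x. f x * indicator B x \<partial>L)"
    and \<nu>: "\<forall>B\<in>sets M. \<nu> B = (\<integral>x. g x * indicator B x \<partial>L)"
  shows "abs_meas M (\<lambda>B. \<mu> B - \<nu> B) = density L (\<lambda>x. ennreal \<bar>f x - g x\<bar>)"
proof -
  let ?D = "density L (\<lambda>x. ennreal \<bar>f x - g x\<bar>)"
  have "?D = measure_of (space M) (sets M) (emeasure ?D)"
    using measure_of_of_measure[of ?D] sets_eq_imp_space_eq[OF sL] sL by simp
  also have "\<dots> = abs_meas M (\<lambda>B. \<mu> B - \<nu> B)"
    unfolding abs_meas_def
  proof (rule measure_of_eq)
    show "sets M \<subseteq> Pow (space M)" by (rule sets.space_closed)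
    fix A assume "A \<in> sigma_sets (space M) (sets M)"
    then have A: "A \<in> sets M" by (simp add: sets.sigma_sets_eq)
    have "pos_part M (\<lambda>B. \<mu> B - \<nu> B) A + neg_part M (\<lambda>B. \<mu> B - \<nu> B) A
        = (\<integral>x. max 0 (f x - g x) * indicator A x \<partial>L) + (\<integral>x. max 0 (g x - f x) * indicator A x \<partial>L)"
      using pos_part_diff_density[OF sL f g \<mu> \<nu> A] pos_part_diff_density[OF sL g f \<nu> \<mu> A]
      by (simp add: neg_part_def)
    also have "\<dots> = (\<integral>x. max 0 (f x - g x) * indicator A x + max 0 (g x - f x) * indicator A x \<partial>L)"
      using A sL f g
      by (intro Bochner_Integration.integral_add[symmetric] integrable_real_mult_indicator
          integrable_max) auto
    also have "\<dots> = (\<integral>x. \<bar>f x - g x\<bar> * indicator A x \<partial>L)"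
      by (rule Bochner_Integration.integral_cong) (auto split: split_indicator)
    also have "ennreal \<dots> = (\<integral>\<^sup>+x. ennreal (\<bar>f x - g x\<bar> * indicator A x) \<partial>L)"
      using A sL f g
      by (intro nn_integral_eq_integral[symmetric] integrable_real_mult_indicator integrable_abs) auto
    also have "\<dots> = emeasure ?D A"
      using A sL f g by (subst emeasure_density) (auto intro!: nn_integral_cong split: split_indicator)
    finally show "emeasure ?D A = ennreal (pos_part M (\<lambda>B. \<mu> B - \<nu> B) A + neg_part M (\<lambda>B. \<mu> B - \<nu> B) A)"
      by simp
  qed
  finally show ?thesis by simp
qed

lemma nonneg_fsm_common_density:
  assumes \<mu>: "\<mu> \<in> fsm M" "\<forall>A\<in>sets M. 0 \<le> \<mu> A"
    and \<nu>: "\<nu> \<in> fsm M" "\<forall>A\<in>sets M. 0 \<le> \<nu> A"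
  obtains L f g where "sets L = sets M"
    "f \<in> borel_measurable L" "\<And>x. 0 \<le> f x" "g \<in> borel_measurable L" "\<And>x. 0 \<le> g x"
    "\<forall>B\<in>sets M. \<mu> B = (\<integral>x. f x * indicator B x \<partial>L)"
    "\<forall>B\<in>sets M. \<nu> B = (\<integral>x. g x * indicator B x \<partial>L)"
    "abs_meas M \<mu> = density L (\<lambda>x. ennreal (f x))"
    "abs_meas M \<nu> = density L (\<lambda>x. ennreal (g x))"
    "abs_meas M (\<lambda>B. \<mu> B - \<nu> B) = density L (\<lambda>x. ennreal \<bar>f x - g x\<bar>)"
proof -
  define \<rho> where "\<rho> = (\<lambda>A. \<mu> A + \<nu> A)"
  have \<rho>: "\<rho> \<in> fsm M" "\<forall>A\<in>sets M. 0 \<le> \<rho> A"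
    using \<mu> \<nu> fsm_add by (auto simp: \<rho>_def)
  let ?L = "fsm_measure M \<rho>"
  obtain f where f: "f \<in> borel_measurable ?L" "\<And>x. 0 \<le> f x" "integrable ?L f"
      "\<forall>B\<in>sets M. \<mu> B = (\<integral>x. f x * indicator B x \<partial>?L)"
    using fsm_density_representation[OF \<rho> \<mu>] \<nu>(2) by (auto simp: \<rho>_def)
  obtain g where g: "g \<in> borel_measurable ?L" "\<And>x. 0 \<le> g x" "integrable ?L g"
      "\<forall>B\<in>sets M. \<nu> B = (\<integral>x. g x * indicator B x \<partial>?L)"
    using fsm_density_representation[OF \<rho> \<nu>] \<mu>(2) by (auto simp: \<rho>_def)
  have zero: "\<forall>B\<in>sets M. (0::real) = (\<integral>x. 0 * indicator B x \<partial>?L)" by simp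
  show ?thesis
  proof (rule that[OF sets_fsm_measure f(1,2) g(1,2) f(4) g(4)])
    show "abs_meas M \<mu> = density ?L (\<lambda>x. ennreal (f x))"
      using abs_meas_diff_density[OF sets_fsm_measure f(1,3) _ _ f(4) zero] f(2) by simp
    show "abs_meas M \<nu> = density ?L (\<lambda>x. ennreal (g x))"
      using abs_meas_diff_density[OF sets_fsm_measure g(1,3) _ _ g(4) zero] g(2) by simp
    show "abs_meas M (\<lambda>B. \<mu> B - \<nu> B) = density ?L (\<lambda>x. ennreal \<bar>f x - g x\<bar>)"
      by (rule abs_meas_diff_density[OF sets_fsm_measure f(1,3) g(1,3) f(4) g(4)])
  qed
qed

lemma wnorm_diff_le:
  assumes \<mu>: "\<mu> \<in> fsm M" "\<forall>A\<in>sets M. 0 \<le> \<mu> A"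
    and \<nu>: "\<nu> \<in> fsm M" "\<forall>A\<in>sets M. 0 \<le> \<nu> A"
    and W: "W \<in> borel_measurable M" "\<forall>x\<in>space M. 0 \<le> W x"
  shows "wnorm M W (\<lambda>A. \<mu> A - \<nu> A) \<le> wnorm M W \<mu> + wnorm M W \<nu>"
proof -
  obtain L f g where L: "sets L = sets M"
    and f: "f \<in> borel_measurable L" "\<And>x. 0 \<le> f x" and g: "g \<in> borel_measurable L" "\<And>x. 0 \<le> g x"
    and "\<forall>B\<in>sets M. \<mu> B = (\<integral>x. f x * indicator B x \<partial>L)"
      "\<forall>B\<in>sets M. \<nu> B = (\<integral>x. g x * indicator B x \<partial>L)"
    and abs: "abs_meas M \<mu> = density L (\<lambda>x. ennreal (f x))"
      "abs_meas M \<nu> = density L (\<lambda>x. ennreal (g x))"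
      "abs_meas M (\<lambda>B. \<mu> B - \<nu> B) = density L (\<lambda>x. ennreal \<bar>f x - g x\<bar>)"
    by (fact nonneg_fsm_common_density[OF \<mu> \<nu>])
  have "W \<in> borel_measurable L" using W(1) by (simp add: measurable_cong_sets[OF L refl])
  then have WL: "(\<lambda>x. ennreal (W x)) \<in> borel_measurable L" by measurable
  have sp: "space L = space M" using L by (rule sets_eq_imp_space_eq)
  have "wnorm M W (\<lambda>A. \<mu> A - \<nu> A) = (\<integral>\<^sup>+x. ennreal \<bar>f x - g x\<bar> * ennreal (W x) \<partial>L)"
    unfolding wnorm_def abs using f(1) g(1) WL by (subst nn_integral_density) auto
  also have "\<dots> \<le> (\<integral>\<^sup>+x. ennreal (f x) * ennreal (W x) + ennreal (g x) * ennreal (W x) \<partial>L)"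
  proof (rule nn_integral_mono)
    fix x assume "x \<in> space L"
    then have "0 \<le> W x" using W(2) sp by auto
    then have "\<bar>f x - g x\<bar> * W x \<le> f x * W x + g x * W x"
      using f(2)[of x] g(2)[of x] by (simp add: mult_right_mono flip: distrib_right)
    then show "ennreal \<bar>f x - g x\<bar> * ennreal (W x) \<le> ennreal (f x) * ennreal (W x) + ennreal (g x) * ennreal (W x)"
      using \<open>0 \<le> W x\<close> f(2)[of x] g(2)[of x]
      by (simp add: ennreal_mult'[symmetric] ennreal_plus[symmetric] del: ennreal_plus)
  qed
  also have "\<dots> = wnorm M W \<mu> + wnorm M W \<nu>"
    unfolding wnorm_def abs using f(1) g(1) WL by (simp add: nn_integral_add nn_integral_density)
  finally show ?thesis .
qed

lemma tvnorm_diff_eq_0_imp_eq: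
  assumes \<mu>: "\<mu> \<in> fsm M" "\<forall>A\<in>sets M. 0 \<le> \<mu> A"
    and \<nu>: "\<nu> \<in> fsm M" "\<forall>A\<in>sets M. 0 \<le> \<nu> A"
    and tv: "tvnorm M (\<lambda>A. \<mu> A - \<nu> A) = 0"
  shows "\<mu> = \<nu>"
proof
  obtain L f g where L: "sets L = sets M"
    and f: "f \<in> borel_measurable L" "\<And>x. 0 \<le> f x" and g: "g \<in> borel_measurable L" "\<And>x. 0 \<le> g x"
    and rep: "\<forall>B\<in>sets M. \<mu> B = (\<integral>x. f x * indicator B x \<partial>L)"
      "\<forall>B\<in>sets M. \<nu> B = (\<integral>x. g x * indicator B x \<partial>L)"
    and "abs_meas M \<mu> = density L (\<lambda>x. ennreal (f x))"
      "abs_meas M \<nu> = density L (\<lambda>x. ennreal (g x))"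
    and abs: "abs_meas M (\<lambda>B. \<mu> B - \<nu> B) = density L (\<lambda>x. ennreal \<bar>f x - g x\<bar>)"
    by (fact nonneg_fsm_common_density[OF \<mu> \<nu>])
  have "(\<integral>\<^sup>+x. ennreal \<bar>f x - g x\<bar> \<partial>L) = 0"
    using tv f(1) g(1) unfolding tvnorm_def wnorm_def abs by (subst (asm) nn_integral_density) auto
  then have ae: "AE x in L. f x = g x"
    using f(1) g(1) by (subst (asm) nn_integral_0_iff_AE) auto
  fix B
  show "\<mu> B = \<nu> B"
  proof (cases "B \<in> sets M")
    case True
    have "(\<integral>x. f x * indicator B x \<partial>L) = (\<integral>x. g x * indicator B x \<partial>L)"
      using ae by (intro integral_cong_AE) (use True L f g in auto)
    then show ?thesis using rep True by simp
  next
    case False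
    then show ?thesis using \<mu>(1) \<nu>(1) by (simp add: fsm_def)
  qed
qed

lemma space_abs_meas [simp]: "space (abs_meas M \<mu>) = space M"
  unfolding abs_meas_def by (simp add: sets.space_measure_of_eq)

lemma wnorm_mono:
  assumes "\<forall>x\<in>space M. W x \<le> W' x"
  shows "wnorm M W \<mu> \<le> wnorm M W' \<mu>"
  unfolding wnorm_def using assms by (intro nn_integral_mono) (auto intro: ennreal_leI)

lemma meas_W_antimono: "\<forall>x\<in>space M. W x \<le> W' x \<Longrightarrow> meas_W M W' \<subseteq> meas_W M W"
  unfolding meas_W_def using wnorm_mono by (fastforce intro: le_less_trans)

lemma tvnorm_le_wnorm: "weight M V \<Longrightarrow> tvnorm M \<mu> \<le> wnorm M V \<mu>"
  unfolding tvnorm_def weight_def by (intro wnorm_mono) auto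

lemma stochastic_op_diff_fixed:
  assumes "stochastic_op M S" "\<mu> \<in> fsm M" "\<nu> \<in> fsm M" "S \<mu> = \<mu>" "S \<nu> = \<nu>"
  shows "S (\<lambda>A. \<mu> A - \<nu> A) = (\<lambda>A. \<mu> A - \<nu> A)"
proof -
  have "S (\<lambda>A. 1 * \<mu> A + (-1) * \<nu> A) = (\<lambda>A. 1 * S \<mu> A + (-1) * S \<nu> A)"
    using assms(1-3) unfolding stochastic_op_def by blast
  then show ?thesis using assms(4,5) by simp
qed

lemma drift_fixed_point_wnorm_le:
  assumes drift: "drift_cond M S V \<phi> K \<sigma>" and \<sigma>: "0 < \<sigma>" and KA: "K / \<sigma> \<le> A"
    and d: "d \<in> meas_W M V" and fixed: "S d = d"
  shows "wnorm M (\<phi> \<circ> V) d \<le> ennreal A * tvnorm M d"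
proof -
  have "wnorm M V d + ennreal \<sigma> * wnorm M (\<phi> \<circ> V) d \<le> wnorm M V d + ennreal K * tvnorm M d"
    using drift d fixed unfolding drift_cond_def by metis
  then have "ennreal \<sigma> * wnorm M (\<phi> \<circ> V) d \<le> ennreal K * tvnorm M d"
    using d by (auto simp: meas_W_def ennreal_add_left_cancel_le)
  then have "ennreal (1 / \<sigma>) * (ennreal \<sigma> * wnorm M (\<phi> \<circ> V) d) \<le> ennreal (1 / \<sigma>) * (ennreal K * tvnorm M d)"
    by (rule mult_left_mono) simp
  then have "wnorm M (\<phi> \<circ> V) d \<le> ennreal (K / \<sigma>) * tvnorm M d"
    using \<sigma> by (simp add: mult.assoc[symmetric] ennreal_mult'[symmetric] divide_ennreal)
  also have "\<dots> \<le> ennreal A * tvnorm M d"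
    using KA by (intro mult_right_mono ennreal_leI) auto
  finally show ?thesis .
qed

lemma contract_fixed_point_tvnorm_eq_0:
  assumes contract: "contract_cond M S V \<phi> N \<gamma> A" and \<gamma>: "\<gamma> < 1"
    and d: "d \<in> zero_mass M" "tvnorm M d < \<infinity>"
    and cone: "wnorm M (\<phi> \<circ> V) d \<le> ennreal A * tvnorm M d"
    and fixed: "(S ^^ N) d = d"
  shows "tvnorm M d = 0"
proof -
  obtain t where t: "0 \<le> t" "tvnorm M d = ennreal t"
    using d(2) by (cases "tvnorm M d") auto
  have "ennreal A * tvnorm M d < \<infinity>" using t by (simp add: ennreal_mult_less_top)
  with cone have "wnorm M (\<phi> \<circ> V) d < \<infinity>" by (rule le_less_trans)
  then have "d \<in> zero_mass M \<inter> meas_W M (\<phi> \<circ> V)"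
    using d(1) by (simp add: zero_mass_def meas_W_def)
  then have "ennreal t \<le> ennreal \<gamma> * ennreal t"
    using contract cone fixed t(2) unfolding contract_cond_def by metis
  then have "t \<le> \<gamma> * t"
    using t(1) \<gamma> by (cases "0 \<le> \<gamma>") (auto simp: ennreal_mult'[symmetric] ennreal_le_iff ennreal_neg)
  then show ?thesis using t \<gamma> by (simp add: mult_le_cancel_right1)
qed

lemma equilibrium_unique:
  assumes S: "stochastic_op M S" and V: "weight M V"
    and drift: "drift_cond M S V \<phi> K \<sigma>" and \<sigma>: "0 < \<sigma>" and KA: "K / \<sigma> \<le> A"
    and contract: "contract_cond M S V \<phi> N \<gamma> A" and \<gamma>: "\<gamma> < 1"
    and \<mu>: "\<mu> \<in> prob_meas M \<inter> meas_W M V" "S \<mu> = \<mu>"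
    and \<nu>: "\<nu> \<in> prob_meas M \<inter> meas_W M V" "S \<nu> = \<nu>"
  shows "\<mu> = \<nu>"
proof -
  have \<mu>': "\<mu> \<in> fsm M" "\<forall>A\<in>sets M. 0 \<le> \<mu> A" "\<mu> (space M) = 1" "wnorm M V \<mu> < \<infinity>"
    and \<nu>': "\<nu> \<in> fsm M" "\<forall>A\<in>sets M. 0 \<le> \<nu> A" "\<nu> (space M) = 1" "wnorm M V \<nu> < \<infinity>"
    using \<mu>(1) \<nu>(1) by (auto simp: prob_meas_def meas_W_def)
  define d where "d = (\<lambda>A. \<mu> A - \<nu> A)"
  have "wnorm M V d \<le> wnorm M V \<mu> + wnorm M V \<nu>"
    unfolding d_def using V by (intro wnorm_diff_le \<mu>'(1,2) \<nu>'(1,2)) (auto simp: weight_def)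
  then have wd: "wnorm M V d < \<infinity>"
    using \<mu>'(4) \<nu>'(4) by (auto simp: less_top intro: le_less_trans)
  have d_meas: "d \<in> meas_W M V" and d_zero: "d \<in> zero_mass M"
    using wd fsm_diff[OF \<mu>'(1) \<nu>'(1)] \<mu>'(3) \<nu>'(3) by (auto simp: d_def meas_W_def zero_mass_def)
  have fixed: "S d = d"
    unfolding d_def by (rule stochastic_op_diff_fixed[OF S \<mu>'(1) \<nu>'(1) \<mu>(2) \<nu>(2)])
  then have "(S ^^ N) d = d" by (induction N) simp_all
  moreover have "tvnorm M d < \<infinity>"
    using tvnorm_le_wnorm[OF V] wd by (rule le_less_trans)
  ultimately have "tvnorm M d = 0"
    using contract_fixed_point_tvnorm_eq_0[OF contract \<gamma> d_zero]
      drift_fixed_point_wnorm_le[OF drift \<sigma> KA d_meas fixed] by blast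
  then show ?thesis unfolding d_def by (rule tvnorm_diff_eq_0_imp_eq[OF \<mu>'(1,2) \<nu>'(1,2)])
qed

theorem corollary4p5:
  fixes M :: "'a measure"
    and S :: "('a set \<Rightarrow> real) \<Rightarrow> ('a set \<Rightarrow> real)"
    and V1 V2 :: "'a \<Rightarrow> real" and \<phi>1 \<phi>2 :: "real \<Rightarrow> real"
    and K1 K2 \<sigma>1 \<sigma>2 \<gamma>1 \<gamma>2 A1 A2 :: real and N1 N2 :: nat
  assumes "stochastic_op M S"
    and "weight M V1" and "weight M V2"
    and "admissible_rate \<phi>1" and "admissible_rate \<phi>2"
    and "\<forall>x\<in>space M. V1 x \<le> \<phi>2 (V2 x)"
    and "stochastic_op_on M V1 S" and "stochastic_op_on M V2 S"
    and "0 < K1" and "0 < \<sigma>1" and "\<sigma>1 < 1" and "drift_cond M S V1 \<phi>1 K1 \<sigma>1"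
    and "0 < K2" and "0 < \<sigma>2" and "\<sigma>2 < 1" and "drift_cond M S V2 \<phi>2 K2 \<sigma>2"
    and "1 \<le> N1" and "0 < \<gamma>1" and "\<gamma>1 < 1" and "K1 / \<sigma>1 < A1"
    and "contract_cond M S V1 \<phi>1 N1 \<gamma>1 A1"
    and "1 \<le> N2" and "0 < \<gamma>2" and "\<gamma>2 < 1" and "K2 / \<sigma>2 < A2"
    and "contract_cond M S V2 \<phi>2 N2 \<gamma>2 A2"
  shows "\<forall>\<mu>\<in>prob_meas M \<inter> meas_W M (\<phi>2 \<circ> V2). \<forall>\<nu>\<in>prob_meas M \<inter> meas_W M (\<phi>2 \<circ> V2).
           S \<mu> = \<mu> \<longrightarrow> S \<nu> = \<nu> \<longrightarrow> \<mu> = \<nu>"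
proof (intro ballI impI)
  fix \<mu> \<nu>
  assume \<mu>: "\<mu> \<in> prob_meas M \<inter> meas_W M (\<phi>2 \<circ> V2)" "S \<mu> = \<mu>"
    and \<nu>: "\<nu> \<in> prob_meas M \<inter> meas_W M (\<phi>2 \<circ> V2)" "S \<nu> = \<nu>"
  have "meas_W M (\<phi>2 \<circ> V2) \<subseteq> meas_W M V1"
    using assms(6) by (intro meas_W_antimono) simp
  then show "\<mu> = \<nu>"
    using equilibrium_unique[OF assms(1,2,12,10) less_imp_le[OF assms(20)] assms(21,19)] \<mu> \<nu>
    by blast
qed

end
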